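(* Let $\mathcal M=\mathcal M(\Sigma,I)$ be a trace monoid with M\"obius polynomial $\mu(z)$ and characteristic root $r$. (1) Let $\widetilde\Sigma\subseteq\Sigma$, and let $\widetilde r$ and $\widetilde\mu(z)$ be the characteristic root and M\"obius polynomial of $\widetilde{\mathcal M}=\langle\widetilde\Sigma\rangle$. Then $r\le\widetilde r$; moreover $r<\widetilde r$ if and only if $\widetilde\mu(r)>0$. (2) $\mathcal M$ has the spectral property if and only if $\mathcal M$ is irreducible.
   Context: A trace monoid $\mathcal M=\mathcal M(\Sigma,I)$ is $\langle\Sigma\mid ab=ba\ ((a,b)\in I)\rangle$, $\Sigma$ a finite alphabet, $I$ irreflexive symmetric; $|x|$ is the length of a trace. $\mathcal M$ is irreducible if the graph $(\Sigma,(\Sigma\times\Sigma)\setminus I)$ is connected. For $H\subseteq\Sigma$, $\langle H\rangle$ is the submonoid generated by $H$ (itself the trace monoid $\mathcal M(H,I\cap(H\times H))$). A clique is a trace $a_1\cdots a_p$ of pairwise distinct letters with $(a_i,a_j)\in I$ for $i\ne j$ (including the empty trace); $\mathscr C$ is the set of cliques. The M\"obius polynomial is $\mu(z)=\sum_{c\in\mathscr C}(-1)^{|c|}z^{|c|}$. The characteristic root $r$ is the radius of convergence of the growth series $\sum_{n\ge0}\#\{x\in\mathcal M:|x|=n\}z^n$. $\mathcal M$ has the spectral property if for every $a\in\Sigma$, the characteristic root $r^a$ of $\langle\Sigma\setminus\{a\}\rangle$ satisfies $r^a>r$. *)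

theory Defs
  imports "HOL-Analysis.Analysis"
begin

definition swap_step :: "('a \<times> 'a) set \<Rightarrow> 'a list \<Rightarrow> 'a list \<Rightarrow> bool" where
  "swap_step I u v \<longleftrightarrow>
     (\<exists>xs ys a b. (a, b) \<in> I \<and> u = xs @ [a, b] @ ys \<and> v = xs @ [b, a] @ ys)"

definition trace_equiv :: "('a \<times> 'a) set \<Rightarrow> 'a list \<Rightarrow> 'a list \<Rightarrow> bool" where
  "trace_equiv I = (swap_step I)\<^sup>*\<^sup>*"

definition words :: "'a set \<Rightarrow> nat \<Rightarrow> 'a list set" where
  "words \<Sigma> n = {w. set w \<subseteq> \<Sigma> \<and> length w = n}"

definition traces_of_length :: "'a set \<Rightarrow> ('a \<times> 'a) set \<Rightarrow> nat \<Rightarrow> 'a list set set" where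
  "traces_of_length \<Sigma> I n = (\<lambda>w. {v. trace_equiv I w v}) ` words \<Sigma> n"

definition growth :: "'a set \<Rightarrow> ('a \<times> 'a) set \<Rightarrow> nat \<Rightarrow> real" where
  "growth \<Sigma> I n = real (card (traces_of_length \<Sigma> I n))"

definition char_root :: "'a set \<Rightarrow> ('a \<times> 'a) set \<Rightarrow> ereal" where
  "char_root \<Sigma> I = conv_radius (growth \<Sigma> I)"

text \<open>Cliques, identified with their (finite) sets of pairwise independent letters.\<close>
definition cliques :: "'a set \<Rightarrow> ('a \<times> 'a) set \<Rightarrow> 'a set set" where
  "cliques \<Sigma> I = {C. C \<subseteq> \<Sigma> \<and> (\<forall>a\<in>C. \<forall>b\<in>C. a \<noteq> b \<longrightarrow> (a, b) \<in> I)}"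

definition mobius :: "'a set \<Rightarrow> ('a \<times> 'a) set \<Rightarrow> real \<Rightarrow> real" where
  "mobius \<Sigma> I z = (\<Sum>C\<in>cliques \<Sigma> I. (-1) ^ card C * z ^ card C)"

text \<open>Submonoid generated by H: the trace monoid M(H, I restricted to H).\<close>
definition restr :: "'a set \<Rightarrow> ('a \<times> 'a) set \<Rightarrow> ('a \<times> 'a) set" where
  "restr H I = I \<inter> (H \<times> H)"

definition trace_monoid :: "'a set \<Rightarrow> ('a \<times> 'a) set \<Rightarrow> bool" where
  "trace_monoid \<Sigma> I \<longleftrightarrow> finite \<Sigma> \<and> I \<subseteq> \<Sigma> \<times> \<Sigma> \<and> (\<forall>a. (a, a) \<notin> I) \<and> sym I"

definition irreducible_tm :: "'a set \<Rightarrow> ('a \<times> 'a) set \<Rightarrow> bool" where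
  "irreducible_tm \<Sigma> I \<longleftrightarrow> (\<forall>a\<in>\<Sigma>. \<forall>b\<in>\<Sigma>. (a, b) \<in> ((\<Sigma> \<times> \<Sigma>) - I)\<^sup>*)"

definition spectral_property :: "'a set \<Rightarrow> ('a \<times> 'a) set \<Rightarrow> bool" where
  "spectral_property \<Sigma> I \<longleftrightarrow>
     (\<forall>a\<in>\<Sigma>. char_root (\<Sigma> - {a}) (restr (\<Sigma> - {a}) I) > char_root \<Sigma> I)"

end

(* The growth series G(z) = sum_n #{traces of length n} z^n satisfies mu(z) G(z) = 1
   (Cartier-Foata): a trace of positive length is counted with sign (-1)^|C| once for every
   clique C of its minimal letters, and these signs cancel. As G has nonnegative coefficients,
   mu > 0 on [0, r) and |mu(z)| >= mu(|z|) for |z| <= r; if mu(r) were nonzero, 1/mu would be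
   holomorphic beyond the radius of convergence r of its expansion G. Hence mu(r) = 0.

   Passing to a subalphabet can only decrease the growth, so r <= r', and r < r' iff mu'(r) > 0
   because mu' is positive below r' and vanishes at r'. If the dependence graph is disconnected,
   mu factors over two mutually independent parts, and a root of one factor remains a root after
   deleting a letter of the other part. If it is connected, mu_S(r) >= 0 for every S, and the
   deletion formula mu_S = mu_(S+a) + r mu_N, for a letter a outside S depending on a letter of S
   and N the letters of S independent of a, gives mu_S(r) > 0 for every proper S by induction
   on |S|, since N is a proper subset of S. *)

theory Submission
  imports Defs "HOL-Complex_Analysis.Complex_Analysis"
begin

section \<open>Trace equivalence and projections\<close>

lemma rtranclp_hom:
  assumes "\<And>x y. r x y \<Longrightarrow> s (f x) (f y)" and "r\<^sup>*\<^sup>* x y"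
  shows "s\<^sup>*\<^sup>* (f x) (f y)"
  using assms(2) by induction (auto intro: rtranclp.rtrancl_into_rtrancl assms(1))

lemma swap_stepI: "(a, b) \<in> I \<Longrightarrow> swap_step I (xs @ a # b # ys) (xs @ b # a # ys)"
  unfolding swap_step_def by auto

lemma trace_equiv_mset: "trace_equiv I u v \<Longrightarrow> mset v = mset u"
  unfolding trace_equiv_def
  by (induction rule: rtranclp_induct) (auto simp: swap_step_def add_mset_commute)

lemma trace_equiv_set: "trace_equiv I u v \<Longrightarrow> set v = set u"
  by (metis trace_equiv_mset set_mset_mset)

lemma trace_equiv_length: "trace_equiv I u v \<Longrightarrow> length v = length u"
  by (metis trace_equiv_mset size_mset)

lemma trace_equiv_refl [simp]: "trace_equiv I u u"
  by (simp add: trace_equiv_def)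

lemma trace_equiv_trans: "trace_equiv I u v \<Longrightarrow> trace_equiv I v w \<Longrightarrow> trace_equiv I u w"
  unfolding trace_equiv_def by simp

lemma trace_equiv_append_left: "trace_equiv I u v \<Longrightarrow> trace_equiv I (w @ u) (w @ v)"
  unfolding trace_equiv_def
  by (rule rtranclp_hom[where f = "(@) w"]) (auto simp: swap_step_def dest: swap_stepI[of _ _ I "w @ _"])

lemma trace_equiv_move_to_front:
  assumes "\<forall>c\<in>set u. (c, a) \<in> I"
  shows "trace_equiv I (u @ a # v) (a # u @ v)"
  using assms
proof (induction u)
  case (Cons c u)
  have "swap_step I ([] @ c # a # u @ v) ([] @ a # c # u @ v)"
    using Cons.prems by (intro swap_stepI) simp
  then have "trace_equiv I (c # a # u @ v) (a # c # u @ v)"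
    by (simp add: trace_equiv_def)
  moreover have "trace_equiv I (c # u @ a # v) (c # a # u @ v)"
    using trace_equiv_append_left[OF Cons.IH, of "[c]"] Cons.prems by simp
  ultimately show ?case
    using trace_equiv_trans by fastforce
qed simp

lemma trace_equiv_restr:
  assumes "set u \<subseteq> S"
  shows "trace_equiv (restr S I) u v \<longleftrightarrow> trace_equiv I u v"
proof
  show "trace_equiv (restr S I) u v \<Longrightarrow> trace_equiv I u v"
    unfolding trace_equiv_def
    by (erule rtranclp_mono[THEN predicate2D, rotated]) (unfold swap_step_def restr_def, blast)
  have restr_step: "swap_step (restr S I) v w" if "swap_step I v w" "set v \<subseteq> S" for v w
    using that by (auto simp: swap_step_def[of I] restr_def intro!: swap_stepI)
  show "trace_equiv (restr S I) u v" if "trace_equiv I u v"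
    using that unfolding trace_equiv_def
  proof (induction rule: rtranclp_induct)
    case (step v w)
    have "set v \<subseteq> S"
      using step.hyps(1) assms trace_equiv_set[of I u v] by (simp add: trace_equiv_def)
    then show ?case
      using step restr_step by (meson rtranclp.rtrancl_into_rtrancl)
  qed simp
qed

definition proj_letters :: "'a \<Rightarrow> 'a \<Rightarrow> 'a list \<Rightarrow> 'a list" where
  "proj_letters a b w = filter (\<lambda>c. c = a \<or> c = b) w"

lemma proj_letters_simps [simp]:
  "proj_letters a b [] = []"
  "proj_letters a b (c # w) = (if c = a \<or> c = b then c # proj_letters a b w else proj_letters a b w)"
  "proj_letters a b (u @ v) = proj_letters a b u @ proj_letters a b v"
  by (simp_all add: proj_letters_def)

lemma proj_letters_commute: "proj_letters a b = proj_letters b a"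
  unfolding proj_letters_def by (rule ext, rule filter_cong) auto

definition proj_equiv :: "('a \<times> 'a) set \<Rightarrow> 'a list \<Rightarrow> 'a list \<Rightarrow> bool" where
  "proj_equiv I u v \<longleftrightarrow> (\<forall>a b. (a, b) \<notin> I \<longrightarrow> proj_letters a b u = proj_letters a b v)"

lemma proj_equiv_append_cancel: "proj_equiv I (w @ u) (w @ v) \<Longrightarrow> proj_equiv I u v"
  by (simp add: proj_equiv_def)

locale independence =
  fixes I :: "('a \<times> 'a) set"
  assumes sym_indep: "sym I" and irrefl_indep: "(a, a) \<notin> I"
begin

lemma indep_commute: "(a, b) \<in> I \<Longrightarrow> (b, a) \<in> I"
  using sym_indep by (rule symD)

lemma equivp_trace_equiv: "equivp (trace_equiv I)"
proof -
  have "symp (swap_step I)"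
    using indep_commute unfolding swap_step_def by (intro sympI) blast
  then show ?thesis
    unfolding trace_equiv_def by (rule equivp_rtranclp)
qed

lemma trace_equiv_sym: "trace_equiv I u v \<Longrightarrow> trace_equiv I v u"
  using equivp_trace_equiv by (meson equivp_symp)

lemma trace_equiv_imp_proj_equiv:
  assumes "trace_equiv I u v"
  shows "proj_equiv I u v"
  unfolding proj_equiv_def
proof (intro allI impI)
  fix c d
  assume "(c, d) \<notin> I"
  then have "proj_letters c d v = proj_letters c d w" if "swap_step I v w" for v w
    using that indep_commute irrefl_indep unfolding swap_step_def by fastforce
  with assms show "proj_letters c d u = proj_letters c d v"
    unfolding trace_equiv_def by (induction rule: rtranclp_induct) auto
qed

lemma trace_equiv_Cons_if_proj_heads:
  assumes heads: "\<forall>b. (a, b) \<notin> I \<longrightarrow> (\<exists>z. proj_letters a b v = a # z)"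
  shows "\<exists>v'. trace_equiv I v (a # v')"
proof -
  have "a \<in> set (proj_letters a a v)"
    using heads irrefl_indep by force
  then obtain v1 v2 where v: "v = v1 @ a # v2" and "a \<notin> set v1"
    by (auto simp: proj_letters_def dest: split_list_first)
  have "(c, a) \<in> I" if "c \<in> set v1" for c
  proof (rule ccontr)
    assume "(c, a) \<notin> I"
    then obtain z where "proj_letters a c v = a # z"
      using heads indep_commute by blast
    moreover have "c \<in> set (proj_letters a c v1)" "a \<notin> set (proj_letters a c v1)"
      using that \<open>a \<notin> set v1\<close> by (auto simp: proj_letters_def)
    ultimately show False
      unfolding v by (cases "proj_letters a c v1") auto
  qed
  then show ?thesis
    unfolding v by (blast intro: trace_equiv_move_to_front)
qed

lemma proj_equiv_imp_trace_equiv: "proj_equiv I u v \<Longrightarrow> trace_equiv I u v"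
proof (induction u arbitrary: v)
  case Nil
  then have "proj_letters c c v = []" for c
    using irrefl_indep by (simp add: proj_equiv_def)
  from this[of "hd v"] show ?case
    by (cases v) auto
next
  case (Cons a u)
  then have "proj_letters a b v = a # proj_letters a b u" if "(a, b) \<notin> I" for b
    using that unfolding proj_equiv_def by (metis proj_letters_simps(2))
  then obtain v' where v': "trace_equiv I v (a # v')"
    using trace_equiv_Cons_if_proj_heads by blast
  then have "proj_equiv I ([a] @ u) ([a] @ v')"
    using Cons.prems trace_equiv_imp_proj_equiv unfolding proj_equiv_def by simp
  then have "trace_equiv I ([a] @ u) ([a] @ v')"
    using Cons.IH trace_equiv_append_left proj_equiv_append_cancel by blast
  then show ?case
    using v' trace_equiv_sym trace_equiv_trans by (metis append_Cons append_Nil)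
qed

theorem trace_equiv_iff_proj_equiv: "trace_equiv I u v \<longleftrightarrow> proj_equiv I u v"
  using trace_equiv_imp_proj_equiv proj_equiv_imp_trace_equiv by blast

lemma trace_equiv_append_cancel: "trace_equiv I (w @ u) (w @ v) \<Longrightarrow> trace_equiv I u v"
  by (simp add: trace_equiv_iff_proj_equiv proj_equiv_append_cancel)

end

section \<open>Minimal letters and the M\<ouml>bius inversion formula\<close>

definition min_letters :: "('a \<times> 'a) set \<Rightarrow> 'a list \<Rightarrow> 'a set" where
  "min_letters I x = {a. \<exists>y. trace_equiv I x (a # y)}"

lemma min_letters_subset_set: "min_letters I x \<subseteq> set x"
  unfolding min_letters_def using trace_equiv_set by fastforce

lemma hd_in_min_letters: "a \<in> min_letters I (a # y)"
  unfolding min_letters_def using trace_equiv_refl by blast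

lemma min_letters_eq_empty_iff: "min_letters I x = {} \<longleftrightarrow> x = []"
proof (cases x)
  case Nil
  then show ?thesis
    using min_letters_subset_set[of I "[]"] by simp
next
  case (Cons a y)
  then show ?thesis
    using hd_in_min_letters[of a I y] by auto
qed

lemma cliques_subset: "C \<in> cliques S I \<Longrightarrow> D \<subseteq> C \<Longrightarrow> D \<in> cliques S I"
  unfolding cliques_def by (simp add: subset_iff)

lemma clique_indep: "C \<in> cliques S I \<Longrightarrow> a \<in> C \<Longrightarrow> b \<in> C \<Longrightarrow> a \<noteq> b \<Longrightarrow> (a, b) \<in> I"
  unfolding cliques_def by simp

lemma clique_subset_alphabet: "C \<in> cliques S I \<Longrightarrow> C \<subseteq> S"
  unfolding cliques_def by simp

context independence
begin

lemma min_letters_cong: "trace_equiv I x x' \<Longrightarrow> min_letters I x = min_letters I x'"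
  using equivp_trace_equiv unfolding min_letters_def equivp_def by simp

lemma min_letters_iff_proj_heads:
  "a \<in> min_letters I x \<longleftrightarrow> (\<forall>b. (a, b) \<notin> I \<longrightarrow> (\<exists>z. proj_letters a b x = a # z))"
proof
  assume "a \<in> min_letters I x"
  then obtain y where "proj_equiv I x (a # y)"
    by (auto simp: min_letters_def trace_equiv_iff_proj_equiv)
  then show "\<forall>b. (a, b) \<notin> I \<longrightarrow> (\<exists>z. proj_letters a b x = a # z)"
    unfolding proj_equiv_def by auto
qed (use trace_equiv_Cons_if_proj_heads in \<open>auto simp: min_letters_def\<close>)

lemma min_letters_indep:
  assumes "a \<in> min_letters I x" "b \<in> min_letters I x" "a \<noteq> b"
  shows "(a, b) \<in> I"
proof (rule ccontr)
  assume "(a, b) \<notin> I"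
  then obtain z z' where "proj_letters a b x = a # z" "proj_letters b a x = b # z'"
    using assms(1,2) indep_commute unfolding min_letters_iff_proj_heads by blast
  then show False
    using assms(3) proj_letters_commute[of a b] by simp
qed

lemma min_letters_clique: "set x \<subseteq> S \<Longrightarrow> min_letters I x \<in> cliques S I"
  using min_letters_subset_set[of I x] min_letters_indep unfolding cliques_def by auto

lemma min_letters_Cons_indep:
  assumes "c \<in> min_letters I (a # y)" "(c, a) \<in> I"
  shows "c \<in> min_letters I y"
  unfolding min_letters_iff_proj_heads
proof (intro allI impI)
  fix b
  assume "(c, b) \<notin> I"
  moreover from this have "a \<noteq> b" "a \<noteq> c"
    using assms(2) irrefl_indep by auto
  ultimately show "\<exists>z. proj_letters c b y = c # z"
    using assms(1) unfolding min_letters_iff_proj_heads by auto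
qed

lemma ex_prefix_iff_subset_min_letters:
  assumes "distinct l" "set l \<in> cliques S I"
  shows "(\<exists>y. trace_equiv I x (l @ y)) \<longleftrightarrow> set l \<subseteq> min_letters I x"
proof
  assume "\<exists>y. trace_equiv I x (l @ y)"
  then obtain y where y: "trace_equiv I x (l @ y)" ..
  show "set l \<subseteq> min_letters I x"
  proof
    fix c
    assume "c \<in> set l"
    then obtain l1 l2 where l: "l = l1 @ c # l2" and "c \<notin> set l1"
      by (auto dest: split_list_first)
    then have "\<forall>d\<in>set l1. (d, c) \<in> I"
      using assms(2) \<open>c \<in> set l\<close> by (auto intro: clique_indep)
    then have "trace_equiv I (l @ y) (c # l1 @ l2 @ y)"
      unfolding l using trace_equiv_move_to_front by fastforce
    then show "c \<in> min_letters I x"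
      unfolding min_letters_def using trace_equiv_trans[OF y] by blast
  qed
next
  show "set l \<subseteq> min_letters I x \<Longrightarrow> \<exists>y. trace_equiv I x (l @ y)"
    using assms
  proof (induction l arbitrary: x)
    case (Cons a l)
    then obtain y1 where y1: "trace_equiv I x (a # y1)"
      unfolding min_letters_def by auto
    have "c \<in> min_letters I y1" if "c \<in> set l" for c
    proof (rule min_letters_Cons_indep)
      show "c \<in> min_letters I (a # y1)"
        using Cons.prems(1) that min_letters_cong[OF y1] by auto
      show "(c, a) \<in> I"
        using Cons.prems(2,3) that by (auto intro: clique_indep)
    qed
    moreover have "distinct l" "set l \<in> cliques S I"
      using Cons.prems(2) cliques_subset[OF Cons.prems(3) set_subset_Cons] by auto
    ultimately obtain y where "trace_equiv I y1 (l @ y)"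
      using Cons.IH[of y1] by blast
    then show ?case
      using trace_equiv_trans[OF y1] trace_equiv_append_left[of I y1 "l @ y" "[a]"] by auto
  qed (metis append_Nil trace_equiv_refl)
qed

end

definition trace_class :: "('a \<times> 'a) set \<Rightarrow> 'a list \<Rightarrow> 'a list set" where
  "trace_class I w = {v. trace_equiv I w v}"

definition trace_min_letters :: "('a \<times> 'a) set \<Rightarrow> 'a list set \<Rightarrow> 'a set" where
  "trace_min_letters I X = (\<Union>x\<in>X. min_letters I x)"

lemma traces_of_length_eq: "traces_of_length S I n = trace_class I ` words S n"
  unfolding traces_of_length_def trace_class_def ..

lemma finite_words: "finite S \<Longrightarrow> finite (words S n)"
  unfolding words_def by (rule finite_lists_length_eq)

lemma finite_traces_of_length: "finite S \<Longrightarrow> finite (traces_of_length S I n)"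
  by (simp add: traces_of_length_eq finite_words)

lemma finite_cliques: "finite S \<Longrightarrow> finite (cliques S I)"
  unfolding cliques_def by simp

lemma card_image_cong_kernel:
  assumes "\<And>x y. x \<in> A \<Longrightarrow> y \<in> A \<Longrightarrow> f x = f y \<longleftrightarrow> g x = g y"
  shows "card (f ` A) = card (g ` A)"
proof -
  have g_inv: "g (inv_into A f (f x)) = g x" if "x \<in> A" for x
    using assms that by (meson f_inv_into_f imageI inv_into_into)
  then have "inj_on (\<lambda>X. g (inv_into A f X)) (f ` A)"
    using assms by (auto simp: inj_on_def)
  moreover have "(\<lambda>X. g (inv_into A f X)) ` f ` A = g ` A"
    using g_inv by (simp add: image_image)
  ultimately show ?thesis
    by (metis card_image)
qed

lemma sum_Pow_alternating:
  "finite A \<Longrightarrow> (\<Sum>X\<in>Pow A. (-1 :: 'b :: comm_ring_1) ^ card X) = (if A = {} then 1 else 0)"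
proof -
  assume "finite A"
  then have "(\<Sum>X\<in>Pow A. (-1 :: 'b) ^ card X) = 0 ^ card A"
    using prod_diff_conv_sum[of A "\<lambda>_. 1 :: 'b" "\<lambda>_. 1"] by simp
  with \<open>finite A\<close> show ?thesis
    by (simp add: power_0_left)
qed

context independence
begin

lemma trace_class_eq_iff: "trace_class I u = trace_class I v \<longleftrightarrow> trace_equiv I u v"
  using equivp_trace_equiv unfolding trace_class_def equivp_def by auto

lemma trace_min_letters_class: "trace_min_letters I (trace_class I x) = min_letters I x"
proof -
  have "(\<Union>v\<in>trace_class I x. min_letters I v) = (\<Union>v\<in>trace_class I x. min_letters I x)"
    using min_letters_cong by (auto simp: trace_class_def)
  moreover have "x \<in> trace_class I x"
    by (simp add: trace_class_def)
  ultimately show ?thesis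
    unfolding trace_min_letters_def by auto
qed

text \<open>By left cancellativity, \<open>y \<mapsto> C y\<close> is a bijection from the traces of length
  \<open>n - card C\<close> onto those of length \<open>n\<close> with prefix \<open>C\<close>.\<close>

lemma card_traces_with_prefix_clique:
  assumes "finite S" "C \<in> cliques S I"
  shows "card {X \<in> traces_of_length S I n. C \<subseteq> trace_min_letters I X}
    = (if card C \<le> n then card (traces_of_length S I (n - card C)) else 0)"
proof (cases "card C \<le> n")
  case False
  have "card C \<le> n" if "x \<in> words S n" "C \<subseteq> min_letters I x" for x
  proof -
    have "card C \<le> card (set x)"
      using that(2) min_letters_subset_set[of I x] by (intro card_mono) auto
    also have "\<dots> \<le> n"
      using that(1) card_length by (auto simp: words_def)
    finally show ?thesis .
  qed
  then have no_traces: "{X \<in> traces_of_length S I n. C \<subseteq> trace_min_letters I X} = {}"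
    using False by (auto simp: traces_of_length_eq trace_min_letters_class)
  show ?thesis
    unfolding no_traces using False by simp
next
  case True
  have "finite C"
    using assms finite_subset[OF clique_subset_alphabet] by blast
  then obtain l where l: "distinct l" "set l = C"
    using finite_distinct_list by blast
  then have length_l: "length l = card C"
    using distinct_card[OF l(1)] by simp
  have prefix_iff: "(\<exists>y. trace_equiv I x (l @ y)) \<longleftrightarrow> C \<subseteq> min_letters I x" for x
    using ex_prefix_iff_subset_min_letters[OF l(1), of S x] assms(2) l(2) by simp
  have traces_eq: "{X \<in> traces_of_length S I n. C \<subseteq> trace_min_letters I X}
      = (\<lambda>y. trace_class I (l @ y)) ` words S (n - card C)"
  proof (intro equalityI subsetI)
    fix X
    assume "X \<in> {X \<in> traces_of_length S I n. C \<subseteq> trace_min_letters I X}"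
    then obtain x where x: "x \<in> words S n" "X = trace_class I x" "C \<subseteq> min_letters I x"
      by (auto simp: traces_of_length_eq trace_min_letters_class)
    then obtain y where y: "trace_equiv I x (l @ y)"
      using prefix_iff by blast
    then have "y \<in> words S (n - card C)"
      using x(1) length_l trace_equiv_set[OF y] trace_equiv_length[OF y] by (auto simp: words_def)
    moreover have "X = trace_class I (l @ y)"
      using x(2) y trace_class_eq_iff by blast
    ultimately show "X \<in> (\<lambda>y. trace_class I (l @ y)) ` words S (n - card C)"
      by blast
  next
    fix X
    assume "X \<in> (\<lambda>y. trace_class I (l @ y)) ` words S (n - card C)"
    then obtain y where y: "y \<in> words S (n - card C)" "X = trace_class I (l @ y)"
      by blast
    have "l @ y \<in> words S n"
      using y(1) True length_l clique_subset_alphabet[OF assms(2)] l(2) by (auto simp: words_def)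
    moreover have "C \<subseteq> min_letters I (l @ y)"
      using prefix_iff trace_equiv_refl by blast
    ultimately show "X \<in> {X \<in> traces_of_length S I n. C \<subseteq> trace_min_letters I X}"
      using y(2) by (auto simp: traces_of_length_eq trace_min_letters_class)
  qed
  have "card ((\<lambda>y. trace_class I (l @ y)) ` words S (n - card C))
      = card (trace_class I ` words S (n - card C))"
    by (rule card_image_cong_kernel)
      (use trace_equiv_append_left trace_equiv_append_cancel in \<open>auto simp: trace_class_eq_iff\<close>)
  then show ?thesis
    using True unfolding traces_eq by (simp add: traces_of_length_eq)
qed

theorem mobius_growth_convolution:
  assumes "finite S"
  shows "(\<Sum>C\<in>cliques S I. (-1) ^ card C * (if card C \<le> n then growth S I (n - card C) else 0))
    = (if n = 0 then 1 else 0)"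
proof -
  let ?T = "traces_of_length S I n" and ?M = "trace_min_letters I"
  have M_clique: "?M X \<in> cliques S I" and M_empty: "?M X = {} \<longleftrightarrow> n = 0"
    if X: "X \<in> ?T" for X
  proof -
    obtain x where "x \<in> words S n" "X = trace_class I x"
      using X unfolding traces_of_length_eq by blast
    then show "?M X \<in> cliques S I" "?M X = {} \<longleftrightarrow> n = 0"
      using min_letters_clique[of x S] min_letters_eq_empty_iff[of I x]
      by (auto simp: words_def trace_min_letters_class)
  qed
  have alternating:
    "(\<Sum>C\<in>{C \<in> cliques S I. C \<subseteq> ?M X}. (-1 :: real) ^ card C) = (if n = 0 then 1 else 0)"
    if "X \<in> ?T" for X
  proof -
    have "{C \<in> cliques S I. C \<subseteq> ?M X} = Pow (?M X)"
      using cliques_subset[OF M_clique[OF that]] by blast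
    moreover have "finite (?M X)"
      using M_clique[OF that] assms finite_subset[OF clique_subset_alphabet] by blast
    ultimately show ?thesis
      using sum_Pow_alternating[of "?M X", where 'b = real] M_empty[OF that] by simp
  qed
  have "(\<Sum>C\<in>cliques S I. (-1) ^ card C * (if card C \<le> n then growth S I (n - card C) else 0))
      = (\<Sum>C\<in>cliques S I. (-1) ^ card C * real (card {X \<in> ?T. C \<subseteq> ?M X}))"
    by (intro sum.cong refl) (simp add: card_traces_with_prefix_clique[OF assms] growth_def)
  also have "\<dots> = (\<Sum>C\<in>cliques S I. \<Sum>X\<in>?T. if C \<subseteq> ?M X then (-1) ^ card C else 0)"
    using finite_traces_of_length[OF assms] by (simp add: sum.inter_filter[symmetric] mult.commute)
  also have "\<dots> = (\<Sum>X\<in>?T. \<Sum>C\<in>{C \<in> cliques S I. C \<subseteq> ?M X}. (-1) ^ card C)"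
    by (subst sum.swap) (simp add: sum.inter_filter finite_cliques[OF assms])
  also have "\<dots> = (\<Sum>X\<in>?T. if n = 0 then 1 else 0)"
    by (rule sum.cong[OF refl alternating])
  also have "\<dots> = (if n = 0 then 1 else 0)"
  proof (cases "n = 0")
    case True
    then have "?T = {trace_class I []}"
      by (auto simp: traces_of_length_eq words_def)
    then show ?thesis
      using True by simp
  qed simp
  finally show ?thesis .
qed

end

section \<open>The characteristic root\<close>

lemma conv_radius_le_of_norm_le:
  fixes f g :: "nat \<Rightarrow> 'a :: {banach, real_normed_div_algebra}"
  assumes "\<And>n. norm (f n) \<le> norm (g n)"
  shows "conv_radius g \<le> conv_radius f"
proof (rule conv_radius_geI_ex')
  fix r :: real
  assume "0 < r" "ereal r < conv_radius g"
  then have "summable (\<lambda>n. norm (g n * of_real r ^ n))"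
    by (intro abs_summable_in_conv_radius) simp
  moreover have "norm (f n * of_real r ^ n) \<le> norm (g n * of_real r ^ n)" for n
    using assms[of n] \<open>0 < r\<close> by (simp add: norm_mult norm_power mult_right_mono)
  ultimately show "summable (\<lambda>n. f n * of_real r ^ n)"
    by (rule summable_comparison_test')
qed

lemma growth_nonneg: "0 \<le> growth S I n"
  by (simp add: growth_def)

lemma growth_le_card_power: "finite S \<Longrightarrow> growth S I n \<le> real (card S) ^ n"
proof -
  assume "finite S"
  then have "card (traces_of_length S I n) \<le> card (words S n)"
    unfolding traces_of_length_eq by (intro card_image_le finite_words)
  also have "card (words S n) = card S ^ n"
    using card_lists_length_eq[OF \<open>finite S\<close>] by (simp add: words_def)
  finally show ?thesis
    unfolding growth_def by (metis of_nat_le_iff of_nat_power)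
qed

lemma growth_ge_1: "finite S \<Longrightarrow> S \<noteq> {} \<Longrightarrow> 1 \<le> growth S I n"
proof -
  assume "finite S" "S \<noteq> {}"
  then obtain a where "a \<in> S"
    by auto
  then have "replicate n a \<in> words S n"
    by (auto simp: words_def)
  then have "traces_of_length S I n \<noteq> {}"
    by (auto simp: traces_of_length_eq)
  then show ?thesis
    using finite_traces_of_length[OF \<open>finite S\<close>]
    by (simp add: growth_def Suc_le_eq card_gt_0_iff)
qed

lemma char_root_pos: "finite S \<Longrightarrow> 0 < char_root S I"
proof -
  assume "finite S"
  define q where "q = 1 / (real (card S) + 1)"
  have "0 < q"
    by (simp add: q_def)
  have "summable (\<lambda>n. (real (card S) * q) ^ n)"
    by (rule summable_geometric) (simp add: q_def)
  moreover have "norm (growth S I n * q ^ n) \<le> (real (card S) * q) ^ n" for n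
    using growth_le_card_power[OF \<open>finite S\<close>, of I n] growth_nonneg[of S I n] \<open>0 < q\<close>
    by (simp add: power_mult_distrib mult_right_mono)
  ultimately have "summable (\<lambda>n. growth S I n * q ^ n)"
    by (rule summable_comparison_test')
  then have "ereal (norm q) \<le> char_root S I"
    unfolding char_root_def by (rule conv_radius_geI)
  moreover have "0 < ereal (norm q)"
    using \<open>0 < q\<close> by simp
  ultimately show ?thesis
    by order
qed

lemma char_root_le_1: "finite S \<Longrightarrow> S \<noteq> {} \<Longrightarrow> char_root S I \<le> 1"
proof -
  assume "finite S" "S \<noteq> {}"
  then have "\<not> (\<lambda>n. growth S I n) \<longlonglongrightarrow> 0"
    using growth_ge_1 by (metis LIMSEQ_le_const le_numeral_extra(2))
  then have "\<not> summable (growth S I)"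
    using summable_LIMSEQ_zero by blast
  then have "\<not> summable (\<lambda>n. norm (growth S I n * 1 ^ n))"
    by (simp add: abs_of_nonneg[OF growth_nonneg])
  then show ?thesis
    unfolding char_root_def using conv_radius_leI[of "growth S I" 1] by (simp add: one_ereal_def)
qed

lemma char_root_finite:
  assumes "finite S" "S \<noteq> {}"
  obtains r where "char_root S I = ereal r" "0 < r"
proof -
  have "0 < char_root S I" "char_root S I \<le> 1"
    using char_root_pos[OF assms(1)] char_root_le_1[OF assms] by auto
  then show thesis
    using that by (cases "char_root S I") auto
qed

lemma char_root_empty: "char_root {} I = \<infinity>"
proof -
  have "growth {} I n = 0" if "n > 0" for n
    using that by (simp add: growth_def traces_of_length_eq words_def)
  then have "conv_radius (growth {} I) = conv_radius (\<lambda>_. 0 :: real)"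
    by (intro conv_radius_cong' eventually_sequentiallyI[of 1]) auto
  then show ?thesis
    unfolding char_root_def by simp
qed

lemma char_root_restr: "char_root S (restr S I) = char_root S I"
proof -
  have "trace_class (restr S I) w = trace_class I w" if "w \<in> words S n" for w n
    using that trace_equiv_restr by (auto simp: trace_class_def words_def)
  then have "growth S (restr S I) = growth S I"
    by (auto simp: growth_def traces_of_length_eq intro!: image_cong)
  then show ?thesis
    by (simp add: char_root_def)
qed

lemma char_root_antimono:
  assumes "finite S" "S' \<subseteq> S"
  shows "char_root S I \<le> char_root S' I"
proof -
  have "growth S' I n \<le> growth S I n" for n
    using assms
    by (auto simp: growth_def traces_of_length_eq words_def intro!: card_mono finite_imageI finite_lists_length_eq)
  then show ?thesis
    unfolding char_root_def by (intro conv_radius_le_of_norm_le) (simp add: growth_def)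
qed

section \<open>The growth series and the M\<ouml>bius polynomial\<close>

definition mobius_poly :: "'a set \<Rightarrow> ('a \<times> 'a) set \<Rightarrow> 'b :: comm_ring_1 poly" where
  "mobius_poly S I = (\<Sum>C\<in>cliques S I. monom ((-1) ^ card C) (card C))"

lemma poly_mobius_poly: "poly (mobius_poly S I) z = (\<Sum>C\<in>cliques S I. (-1) ^ card C * z ^ card C)"
  by (simp add: mobius_poly_def poly_sum poly_monom)

lemma mobius_eq_poly: "mobius S I = poly (mobius_poly S I)"
  by (simp add: mobius_def poly_mobius_poly fun_eq_iff)

definition growth_fps :: "'a set \<Rightarrow> ('a \<times> 'a) set \<Rightarrow> 'b :: real_algebra_1 fps" where
  "growth_fps S I = Abs_fps (\<lambda>n. of_real (growth S I n))"

lemma fps_conv_radius_growth_fps: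
  "fps_conv_radius (growth_fps S I :: 'b :: {banach, real_normed_div_algebra} fps) = char_root S I"
proof -
  have "conv_radius (\<lambda>n. of_real (growth S I n) :: 'b)
      = conv_radius (\<lambda>n. norm (of_real (growth S I n) :: 'b))"
    by (rule conv_radius_norm[symmetric])
  also have "\<dots> = conv_radius (\<lambda>n. norm (growth S I n))"
    by (simp only: norm_of_real real_norm_def)
  also have "\<dots> = char_root S I"
    unfolding char_root_def by (rule conv_radius_norm)
  finally show ?thesis
    by (simp add: fps_conv_radius_def growth_fps_def)
qed

context independence
begin

lemma mobius_poly_times_growth_fps:
  assumes "finite S"
  shows "fps_of_poly (mobius_poly S I) * growth_fps S I = (1 :: 'b :: {comm_ring_1, real_algebra_1} fps)"
proof (rule fps_ext)
  fix n
  have "(fps_of_poly (mobius_poly S I) * growth_fps S I) $ n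
      = (\<Sum>C\<in>cliques S I. (-1) ^ card C * (fps_X ^ card C * growth_fps S I) $ n)"
    by (simp add: mobius_poly_def fps_of_poly_sum fps_of_poly_monom sum_distrib_right fps_sum_nth
        mult.assoc)
  also have "\<dots> = of_real (\<Sum>C\<in>cliques S I.
      (-1) ^ card C * (if card C \<le> n then growth S I (n - card C) else 0))"
    by (auto simp: fps_X_power_mult_nth growth_fps_def of_real_sum intro!: sum.cong)
  also have "\<dots> = (1 :: 'b fps) $ n"
    by (simp add: mobius_growth_convolution[OF assms])
  finally show "(fps_of_poly (mobius_poly S I) * growth_fps S I) $ n = (1 :: 'b fps) $ n" .
qed

lemma mobius_times_growth_series:
  fixes z :: "'b :: {banach, real_normed_field}"
  assumes "finite S" "ereal (norm z) < char_root S I"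
  shows "poly (mobius_poly S I) z * eval_fps (growth_fps S I) z = 1"
proof -
  have "eval_fps (fps_of_poly (mobius_poly S I) * growth_fps S I) z = 1"
    by (simp add: mobius_poly_times_growth_fps[OF assms(1)])
  then show ?thesis
    using assms(2) by (subst (asm) eval_fps_mult) (simp_all add: fps_conv_radius_growth_fps)
qed

lemma mobius_pos_below_char_root:
  assumes "finite S" "0 \<le> x" "ereal x < char_root S I"
  shows "0 < mobius S I x"
proof (rule ccontr)
  assume "\<not> 0 < mobius S I x"
  have "summable (\<lambda>n. growth_fps S I $ n * x ^ n)"
    using assms(2,3) by (intro summable_fps) (simp add: fps_conv_radius_growth_fps)
  then have "0 \<le> eval_fps (growth_fps S I) x"
    unfolding eval_fps_def using assms(2) by (intro suminf_nonneg) (simp_all add: growth_fps_def growth_def)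
  with \<open>\<not> 0 < mobius S I x\<close> have "mobius S I x * eval_fps (growth_fps S I) x \<le> 0"
    by (simp add: mult_nonpos_nonneg)
  moreover have "mobius S I x * eval_fps (growth_fps S I) x = 1"
    using mobius_times_growth_series[OF assms(1), of x] assms(2,3) by (simp add: mobius_eq_poly)
  ultimately show False
    by simp
qed

text \<open>Since the growth series has nonnegative coefficients, \<open>|G(z)| \<le> G(|z|)\<close>; inverting
  \<open>\<mu>(z) G(z) = 1\<close> gives the bound below.\<close>

lemma mobius_norm_le_norm_poly:
  fixes z :: complex
  assumes "finite S" "ereal (norm z) < char_root S I"
  shows "mobius S I (norm z) \<le> norm (poly (mobius_poly S I) z)"
proof -
  let ?Gc = "eval_fps (growth_fps S I) z" and ?Gr = "eval_fps (growth_fps S I) (norm z)"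
  have "norm ?Gc \<le> (\<Sum>n. norm (growth_fps S I $ n * z ^ n))"
    unfolding eval_fps_def
    using assms(2) by (intro summable_norm norm_summable_fps) (simp add: fps_conv_radius_growth_fps)
  also have "\<dots> = ?Gr"
    by (simp add: eval_fps_def growth_fps_def norm_mult norm_power growth_def)
  finally have "norm ?Gc \<le> ?Gr" .
  have "norm ?Gc * norm (poly (mobius_poly S I) z) = 1"
    using mobius_times_growth_series[OF assms] by (metis mult.commute norm_mult norm_one)
  then have "0 < norm ?Gc" and poly_eq: "norm (poly (mobius_poly S I) z) = inverse (norm ?Gc)"
    by (auto simp: inverse_unique[symmetric])
  have "?Gr * mobius S I (norm z) = 1"
    using mobius_times_growth_series[OF assms(1), of "norm z"] assms(2)
    by (simp add: mobius_eq_poly mult.commute)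
  then have "mobius S I (norm z) = inverse ?Gr"
    by (simp add: inverse_unique)
  with poly_eq \<open>norm ?Gc \<le> ?Gr\<close> \<open>0 < norm ?Gc\<close> show ?thesis
    by (simp add: le_imp_inverse_le)
qed

lemma mobius_norm_le_norm_poly_cball:
  fixes z :: complex
  assumes "finite S" "char_root S I = ereal r" "norm z \<le> r"
  shows "mobius S I (norm z) \<le> norm (poly (mobius_poly S I) z)"
proof -
  have "0 < r"
    using char_root_pos[OF assms(1), of I] assms(2) by simp
  have "closure (ball 0 r) \<subseteq> {z :: complex. mobius S I (norm z) \<le> norm (poly (mobius_poly S I) z)}"
  proof (rule closure_minimal)
    show "ball 0 r \<subseteq> {z :: complex. mobius S I (norm z) \<le> norm (poly (mobius_poly S I) z)}"
    proof
      fix z :: complex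
      assume "z \<in> ball 0 r"
      then show "z \<in> {z :: complex. mobius S I (norm z) \<le> norm (poly (mobius_poly S I) z)}"
        using mobius_norm_le_norm_poly[OF assms(1), of z] assms(2) by simp
    qed
    show "closed {z. mobius S I (norm z) \<le> norm (poly (mobius_poly S I) z :: complex)}"
      unfolding mobius_eq_poly by (intro closed_Collect_le continuous_intros)
  qed
  then show ?thesis
    using \<open>0 < r\<close> assms(3) by auto
qed

end

lemma fps_conv_radius_inverse_poly_gt:
  fixes p :: "complex poly"
  assumes "0 \<le> R" and no_root: "\<And>z. norm z \<le> R \<Longrightarrow> poly p z \<noteq> 0"
  shows "ereal R < fps_conv_radius (inverse (fps_of_poly p))"
proof -
  have "p \<noteq> 0"
    using no_root[of 0] assms(1) by auto
  then have fin: "finite (norm ` {z. poly p z = 0})"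
    by (simp add: poly_roots_finite)
  have roots_outside: "R < norm z" if "poly p z = 0" for z
    using no_root that by (meson not_le)
  define R' where "R' = Min (insert (R + 1) (norm ` {z. poly p z = 0}))"
  have "R < R'"
    unfolding R'_def using fin roots_outside by simp
  have nonzero: "poly p z \<noteq> 0" if "norm z < R'" for z
    using that fin Min_le[of "insert (R + 1) (norm ` {z. poly p z = 0})" "norm z"] unfolding R'_def by auto
  have "eval_fps (fps_of_poly p) = poly p"
    by auto
  then have "poly p has_fps_expansion fps_of_poly p"
    using eval_fps_has_fps_expansion[of "fps_of_poly p"] by simp
  then have "(\<lambda>z. inverse (poly p z)) has_fps_expansion inverse (fps_of_poly p)"
    by (rule has_fps_expansion_inverse) (use no_root[of 0] assms(1) in \<open>simp add: poly_0_coeff_0\<close>)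
  moreover have "(\<lambda>z. inverse (poly p z)) holomorphic_on eball 0 (ereal R')"
    using nonzero by (auto intro!: holomorphic_intros)
  ultimately have "ereal R' \<le> fps_conv_radius (inverse (fps_of_poly p))"
    by (rule holomorphic_on_imp_fps_conv_radius_ge)
  moreover have "ereal R < ereal R'"
    using \<open>R < R'\<close> by simp
  ultimately show ?thesis
    by order
qed

context independence
begin

text \<open>Pringsheim-type argument: if \<open>\<mu>(r) > 0\<close>, the bound above keeps \<open>\<mu>\<close> zero-free on the closed
  disc of radius \<open>r\<close>, so \<open>1/\<mu>\<close>, whose expansion is the growth series, would have radius of
  convergence larger than \<open>r\<close>.\<close>

theorem mobius_char_root_eq_0:
  assumes "finite S" "S \<noteq> {}"
  shows "mobius S I (real_of_ereal (char_root S I)) = 0"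
proof -
  obtain r where r: "char_root S I = ereal r" and "0 < r"
    using char_root_finite[OF assms] .
  have pos: "0 < mobius S I x" if "0 \<le> x" "x < r" for x
    using mobius_pos_below_char_root[OF assms(1) that(1)] that(2) r by simp
  have cont: "continuous_on A (mobius S I)" for A
    unfolding mobius_eq_poly by (intro continuous_intros)
  have "0 \<le> mobius S I r"
  proof (rule ccontr)
    assume "\<not> 0 \<le> mobius S I r"
    moreover have "0 \<le> mobius S I 0"
      using pos[of 0] \<open>0 < r\<close> by simp
    ultimately obtain x where "0 \<le> x" "x \<le> r" "mobius S I x = 0"
      using IVT2'[of "mobius S I" r 0 0] cont \<open>0 < r\<close> by auto
    then show False
      using pos[of x] \<open>\<not> 0 \<le> mobius S I r\<close> by (cases "x = r") auto
  qed
  moreover have "mobius S I r \<le> 0"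
  proof (rule ccontr)
    assume "\<not> mobius S I r \<le> 0"
    then have pos_closed: "0 < mobius S I x" if "0 \<le> x" "x \<le> r" for x
      using pos that by (cases "x = r") auto
    have "poly (mobius_poly S I) z \<noteq> 0" if "norm z \<le> r" for z :: complex
    proof
      assume "poly (mobius_poly S I) z = 0"
      then have "mobius S I (norm z) \<le> 0"
        using mobius_norm_le_norm_poly_cball[OF assms(1) r that] by simp
      with pos_closed[of "norm z"] that show False
        by simp
    qed
    then have "ereal r < fps_conv_radius (inverse (fps_of_poly (mobius_poly S I)) :: complex fps)"
      using \<open>0 < r\<close> by (intro fps_conv_radius_inverse_poly_gt) auto
    also have "inverse (fps_of_poly (mobius_poly S I)) = (growth_fps S I :: complex fps)"
      by (rule fps_inverse_unique) (rule mobius_poly_times_growth_fps[OF assms(1)])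
    finally show False
      using r by (simp add: fps_conv_radius_growth_fps)
  qed
  ultimately show ?thesis
    using r by simp
qed

end

section \<open>Sub-alphabets and the spectral property\<close>

lemma mobius_empty [simp]: "mobius {} I x = 1"
proof -
  have "cliques {} I = {{}}"
    unfolding cliques_def by auto
  then show ?thesis
    by (simp add: mobius_def)
qed

lemma mobius_restr: "mobius S (restr S I) = mobius S I"
proof -
  have "cliques S (restr S I) = cliques S I"
    unfolding cliques_def restr_def by auto
  then show ?thesis
    by (simp add: mobius_def fun_eq_iff)
qed

context independence
begin

theorem char_root_less_iff_mobius_pos:
  assumes "finite S" "S \<noteq> {}" "S' \<subseteq> S"
  shows "char_root S I < char_root S' I \<longleftrightarrow> 0 < mobius S' I (real_of_ereal (char_root S I))"
proof
  obtain r where r: "char_root S I = ereal r" "0 < r"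
    using char_root_finite[OF assms(1,2)] .
  have "finite S'"
    using assms(1,3) by (rule finite_subset[rotated])
  show "0 < mobius S' I (real_of_ereal (char_root S I))" if "char_root S I < char_root S' I"
    using mobius_pos_below_char_root[OF \<open>finite S'\<close>, of r] that r by simp
  show "char_root S I < char_root S' I" if pos: "0 < mobius S' I (real_of_ereal (char_root S I))"
  proof (rule ccontr)
    assume "\<not> char_root S I < char_root S' I"
    then have eq: "char_root S' I = char_root S I"
      using char_root_antimono[OF assms(1,3), of I] by order
    then have "S' \<noteq> {}"
      using r(1) char_root_empty[of I] by auto
    then have "mobius S' I (real_of_ereal (char_root S I)) = 0"
      using mobius_char_root_eq_0[OF \<open>finite S'\<close>] eq by simp
    with pos show False
      by simp
  qed
qed

lemma mobius_char_root_nonneg: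
  assumes "finite S" "S \<noteq> {}" "S' \<subseteq> S"
  shows "0 \<le> mobius S' I (real_of_ereal (char_root S I))"
proof (cases "char_root S I < char_root S' I \<or> S' = {}")
  case True
  then show ?thesis
    using char_root_less_iff_mobius_pos[OF assms] by auto
next
  case False
  then have "\<not> char_root S I < char_root S' I" "S' \<noteq> {}"
    by auto
  then have "char_root S' I = char_root S I"
    using char_root_antimono[OF assms(1,3), of I] by order
  with \<open>S' \<noteq> {}\<close> show ?thesis
    using mobius_char_root_eq_0[of S'] finite_subset[OF assms(3,1)] by simp
qed

lemma mobius_remove_letter:
  assumes "finite U" "a \<in> U"
  shows "mobius U I x = mobius (U - {a}) I x - x * mobius {c \<in> U. (a, c) \<in> I} I x"
proof -
  define N where "N = {c \<in> U. (a, c) \<in> I}"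
  have "a \<notin> N"
    unfolding N_def using irrefl_indep by simp
  have cliques_U: "cliques U I = cliques (U - {a}) I \<union> insert a ` cliques N I"
  proof (intro equalityI subsetI)
    fix C
    assume C: "C \<in> cliques U I"
    show "C \<in> cliques (U - {a}) I \<union> insert a ` cliques N I"
    proof (cases "a \<in> C")
      case True
      then have "C - {a} \<in> cliques N I" "C = insert a (C - {a})"
        using C by (auto simp: cliques_def N_def)
      then show ?thesis
        by blast
    qed (use C in \<open>auto simp: cliques_def\<close>)
  next
    fix C
    assume "C \<in> cliques (U - {a}) I \<union> insert a ` cliques N I"
    then show "C \<in> cliques U I"
      using assms(2) indep_commute by (auto simp: cliques_def N_def)
  qed
  have "inj_on (insert a) (cliques N I)"
  proof (rule inj_onI)
    fix C D
    assume "C \<in> cliques N I" "D \<in> cliques N I" "insert a C = insert a D"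
    moreover from calculation(1,2) have "a \<notin> C" "a \<notin> D"
      using \<open>a \<notin> N\<close> clique_subset_alphabet by blast+
    ultimately show "C = D"
      by (simp add: insert_ident)
  qed
  moreover have "cliques (U - {a}) I \<inter> insert a ` cliques N I = {}"
    using clique_subset_alphabet by blast
  moreover have "finite (cliques (U - {a}) I)" "finite (cliques N I)"
    using assms(1) by (simp_all add: finite_cliques N_def)
  ultimately have "mobius U I x = mobius (U - {a}) I x
      + (\<Sum>C\<in>cliques N I. (-1) ^ card (insert a C) * x ^ card (insert a C))"
    unfolding mobius_def cliques_U by (simp add: sum.union_disjoint sum.reindex)
  also have "(\<Sum>C\<in>cliques N I. (-1) ^ card (insert a C) * x ^ card (insert a C))
      = - x * mobius N I x"
    unfolding mobius_def sum_distrib_left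
  proof (rule sum.cong[OF refl])
    fix C
    assume "C \<in> cliques N I"
    then have "C \<subseteq> N"
      by (rule clique_subset_alphabet)
    then have "finite C" "a \<notin> C"
      using assms(1) \<open>a \<notin> N\<close> finite_subset[of C U] by (auto simp: N_def)
    then show "(-1) ^ card (insert a C) * x ^ card (insert a C) = - x * ((-1) ^ card C * x ^ card C)"
      by simp
  qed
  finally show ?thesis
    by (simp add: N_def)
qed

lemma mobius_Un_indep:
  assumes "finite A" "finite B" "A \<inter> B = {}" "\<forall>x\<in>A. \<forall>y\<in>B. (x, y) \<in> I"
  shows "mobius (A \<union> B) I z = mobius A I z * mobius B I z"
proof -
  let ?union = "\<lambda>(C, D). C \<union> D"
  have cliques_AB: "cliques (A \<union> B) I = ?union ` (cliques A I \<times> cliques B I)"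
  proof (intro equalityI subsetI)
    fix C
    assume "C \<in> cliques (A \<union> B) I"
    then have "C \<inter> A \<in> cliques A I" "C \<inter> B \<in> cliques B I" "C = ?union (C \<inter> A, C \<inter> B)"
      by (auto simp: cliques_def)
    then show "C \<in> ?union ` (cliques A I \<times> cliques B I)"
      by blast
  next
    fix C
    assume "C \<in> ?union ` (cliques A I \<times> cliques B I)"
    then obtain CA CB where CA: "CA \<in> cliques A I" and CB: "CB \<in> cliques B I" and C: "C = CA \<union> CB"
      by auto
    have "(x, y) \<in> I" if "x \<in> C" "y \<in> C" "x \<noteq> y" for x y
      using that clique_indep[OF CA] clique_indep[OF CB] assms(4) indep_commute
        clique_subset_alphabet[OF CA] clique_subset_alphabet[OF CB]
      unfolding C by blast
    moreover have "C \<subseteq> A \<union> B"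
      using C clique_subset_alphabet[OF CA] clique_subset_alphabet[OF CB] by blast
    ultimately show "C \<in> cliques (A \<union> B) I"
      by (simp add: cliques_def)
  qed
  have "inj_on ?union (cliques A I \<times> cliques B I)"
  proof (rule inj_onI, clarify)
    fix C D C' D'
    assume "C \<in> cliques A I" "D \<in> cliques B I" "C' \<in> cliques A I" "D' \<in> cliques B I"
    then have "C \<subseteq> A" "D \<subseteq> B" "C' \<subseteq> A" "D' \<subseteq> B"
      by (simp_all add: clique_subset_alphabet)
    moreover assume "C \<union> D = C' \<union> D'"
    ultimately show "C = C' \<and> D = D'"
      using assms(3) by blast
  qed
  moreover have "card (C \<union> D) = card C + card D" if "C \<in> cliques A I" "D \<in> cliques B I" for C D
  proof -
    have "C \<subseteq> A" "D \<subseteq> B"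
      using that by (simp_all add: clique_subset_alphabet)
    then have "C \<inter> D = {}" "finite C" "finite D"
      using assms(1-3) finite_subset[of C A] finite_subset[of D B] by auto
    then show ?thesis
      by (simp add: card_Un_disjoint)
  qed
  ultimately have "mobius (A \<union> B) I z
      = (\<Sum>(C, D)\<in>cliques A I \<times> cliques B I. ((-1) ^ card C * z ^ card C) * ((-1) ^ card D * z ^ card D))"
    unfolding mobius_def cliques_AB
    by (subst sum.reindex) (auto intro!: sum.cong simp: power_add mult_ac)
  also have "\<dots> = mobius A I z * mobius B I z"
    unfolding mobius_def sum_product sum.cartesian_product ..
  finally show ?thesis .
qed

end

lemma rtrancl_exits:
  assumes "(s, t) \<in> R\<^sup>*" "s \<in> S" "t \<notin> S"
  obtains x y where "x \<in> S" "y \<notin> S" "(x, y) \<in> R"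
  using assms by (induction rule: rtrancl_induct) auto

lemma not_irreducible_split:
  assumes "\<not> irreducible_tm S I"
  obtains A B where "S = A \<union> B" "A \<inter> B = {}" "A \<noteq> {}" "B \<noteq> {}" "\<forall>x\<in>A. \<forall>y\<in>B. (x, y) \<in> I"
proof -
  obtain a b where ab: "a \<in> S" "b \<in> S" "(a, b) \<notin> (S \<times> S - I)\<^sup>*"
    using assms unfolding irreducible_tm_def by blast
  define A where "A = {x \<in> S. (a, x) \<in> (S \<times> S - I)\<^sup>*}"
  have "\<forall>x\<in>A. \<forall>y\<in>S - A. (x, y) \<in> I"
    unfolding A_def by (auto intro: rtrancl_into_rtrancl)
  moreover have "a \<in> A" "b \<in> S - A"
    using ab by (auto simp: A_def)
  ultimately show thesis
    using that[of A "S - A"] by (auto simp: A_def)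
qed

context independence
begin

lemma mobius_pos_if_irreducible:
  assumes "finite T" "irreducible_tm T I" "0 < x" "\<And>U. U \<subseteq> T \<Longrightarrow> 0 \<le> mobius U I x"
  shows "S \<subset> T \<Longrightarrow> 0 < mobius S I x"
proof (induction "card S" arbitrary: S rule: less_induct)
  case less
  show ?case
  proof (cases "S = {}")
    case False
    then obtain s t where "s \<in> S" "t \<in> T" "t \<notin> S"
      using less.prems by auto
    then have "(s, t) \<in> (T \<times> T - I)\<^sup>*"
      using assms(2) less.prems unfolding irreducible_tm_def by blast
    then obtain b a where ba: "b \<in> S" "a \<notin> S" "(b, a) \<in> T \<times> T - I"
      using \<open>s \<in> S\<close> \<open>t \<notin> S\<close> by (rule rtrancl_exits)
    define N where "N = {c \<in> insert a S. (a, c) \<in> I}"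
    have "finite S"
      using less.prems assms(1) finite_subset by auto
    have "N \<subset> S"
      using ba irrefl_indep indep_commute by (auto simp: N_def)
    then have "0 < mobius N I x"
      using less.prems \<open>finite S\<close> by (intro less.hyps psubset_card_mono) auto
    then have "0 < x * mobius N I x"
      using assms(3) by simp
    moreover have "mobius (insert a S) I x = mobius S I x - x * mobius N I x"
      using mobius_remove_letter[of "insert a S" a x] \<open>finite S\<close> ba(2) by (simp add: N_def)
    moreover have "0 \<le> mobius (insert a S) I x"
      using assms(4) ba(3) less.prems by auto
    ultimately show ?thesis
      by linarith
  qed simp
qed

lemma mobius_root_remove_letter_if_not_irreducible:
  assumes "finite S" "\<not> irreducible_tm S I" "mobius S I x = 0"
  obtains a where "a \<in> S" "mobius (S - {a}) I x = 0"
proof -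
  obtain A B where AB: "S = A \<union> B" "A \<inter> B = {}" "A \<noteq> {}" "B \<noteq> {}"
    and cross: "\<forall>x\<in>A. \<forall>y\<in>B. (x, y) \<in> I"
    using assms(2) by (rule not_irreducible_split)
  have fin: "finite A" "finite B"
    using assms(1) AB(1) by simp_all
  have "mobius A I x * mobius B I x = 0"
    using assms(3) mobius_Un_indep[OF fin AB(2) cross] AB(1) by simp
  then consider "mobius A I x = 0" | "mobius B I x = 0"
    by auto
  then show thesis
  proof cases
    case 1
    from AB(4) obtain b where "b \<in> B"
      by auto
    then have "S - {b} = A \<union> (B - {b})"
      using AB(1,2) by auto
    then have "mobius (S - {b}) I x = mobius A I x * mobius (B - {b}) I x"
      using mobius_Un_indep[of A "B - {b}"] fin AB(2) cross by auto
    then show thesis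
      using 1 \<open>b \<in> B\<close> AB(1) that[of b] by simp
  next
    case 2
    from AB(3) obtain a where "a \<in> A"
      by auto
    then have "S - {a} = (A - {a}) \<union> B"
      using AB(1,2) by auto
    then have "mobius (S - {a}) I x = mobius (A - {a}) I x * mobius B I x"
      using mobius_Un_indep[of "A - {a}" B] fin AB(2) cross by auto
    then show thesis
      using 2 \<open>a \<in> A\<close> AB(1) that[of a] by simp
  qed
qed

theorem spectral_property_iff_irreducible:
  assumes "finite S" "S \<noteq> {}"
  shows "spectral_property S I \<longleftrightarrow> irreducible_tm S I"
proof -
  define r where "r = real_of_ereal (char_root S I)"
  have spectral_iff: "spectral_property S I \<longleftrightarrow> (\<forall>a\<in>S. 0 < mobius (S - {a}) I r)"
    unfolding spectral_property_def char_root_restr r_def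
    using char_root_less_iff_mobius_pos[OF assms] by blast
  show ?thesis
  proof
    assume "spectral_property S I"
    show "irreducible_tm S I"
    proof (rule ccontr)
      assume "\<not> irreducible_tm S I"
      then obtain a where "a \<in> S" "mobius (S - {a}) I r = 0"
        using mobius_root_remove_letter_if_not_irreducible[OF assms(1)] mobius_char_root_eq_0[OF assms]
        unfolding r_def by metis
      with \<open>spectral_property S I\<close> spectral_iff show False
        by auto
    qed
  next
    assume "irreducible_tm S I"
    have "0 < r"
      using char_root_finite[OF assms] unfolding r_def by (metis real_of_ereal.simps(1))
    have "0 < mobius (S - {a}) I r" if "a \<in> S" for a
      using mobius_pos_if_irreducible[OF assms(1) \<open>irreducible_tm S I\<close> \<open>0 < r\<close>]
        mobius_char_root_nonneg[OF assms] that unfolding r_def by blast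
    then show "spectral_property S I"
      using spectral_iff by blast
  qed
qed

end

theorem proposition8:
  fixes \<Sigma> \<Sigma>' :: "'a set" and I :: "('a \<times> 'a) set"
  assumes "trace_monoid \<Sigma> I" and "\<Sigma> \<noteq> {}" and "\<Sigma>' \<subseteq> \<Sigma>"
  shows "(char_root \<Sigma> I \<le> char_root \<Sigma>' (restr \<Sigma>' I) \<and>
          (char_root \<Sigma> I < char_root \<Sigma>' (restr \<Sigma>' I) \<longleftrightarrow>
             mobius \<Sigma>' (restr \<Sigma>' I) (real_of_ereal (char_root \<Sigma> I)) > 0))
         \<and> (spectral_property \<Sigma> I \<longleftrightarrow> irreducible_tm \<Sigma> I)"
proof -
  interpret independence I
    using assms(1) by unfold_locales (auto simp: trace_monoid_def)
  have "finite \<Sigma>"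
    using assms(1) by (simp add: trace_monoid_def)
  then show ?thesis
    using char_root_antimono[OF \<open>finite \<Sigma>\<close> assms(3)]
      char_root_less_iff_mobius_pos[OF \<open>finite \<Sigma>\<close> assms(2,3)]
      spectral_property_iff_irreducible[OF \<open>finite \<Sigma>\<close> assms(2)]
    by (simp add: char_root_restr mobius_restr)
qed

end
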